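(* For every $n\geq 1$, there are at least $2^{2^n-1}$ $n$-cube unique sink orientations that have property L.
   Context: For sets $U,V$ let $U\oplus V=(U\cup V)\setminus(U\cap V)$ and $[U,W]=\{X:U\subseteq X\subseteq W\}$. An $n$-cube orientation is a directed graph $\mathcal{O}$ on vertex set $[\emptyset,[n]]$ (all subsets of $[n]=\{1,\dots,n\}$) containing, for every vertex $V$ and every $i\in[n]$, exactly one of the directed edges $(V,V\oplus\{i\})$, $(V\oplus\{i\},V)$. Its outmap is $\phi_{\mathcal{O}}(V)=\{i: (V,V\oplus\{i\})\in\mathcal{O}\}$. For a vertex $V$, the L-graph $\mathcal{L}_{\mathcal{O}}(V)$ has vertex set $[n]\setminus V$ and an arc $(i,j)$ for distinct $i,j\notin V$ whenever $j\in\phi_{\mathcal{O}}(V)\oplus\phi_{\mathcal{O}}(V\cup\{i\})$. $\mathcal{O}$ has property L if all its L-graphs are acyclic. A face is the subgraph induced by an interval $[U,W]$ of vertices; $\mathcal{O}$ is a unique sink orientation (USO) if every face has exactly one sink (vertex with no outgoing edge within the face). *)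

theory Defs
  imports Main
begin

definition symdiff :: "'a set \<Rightarrow> 'a set \<Rightarrow> 'a set" where
  "symdiff U V = (U \<union> V) - (U \<inter> V)"

definition cube_orientation :: "nat \<Rightarrow> (nat set \<times> nat set) set \<Rightarrow> bool" where
  "cube_orientation n D \<longleftrightarrow>
     D \<subseteq> {(V, symdiff V {i}) | V i. V \<subseteq> {1..n} \<and> i \<in> {1..n}} \<and>
     (\<forall>V \<subseteq> {1..n}. \<forall>i \<in> {1..n}.
        ((V, symdiff V {i}) \<in> D \<and> (symdiff V {i}, V) \<notin> D) \<or>
        ((V, symdiff V {i}) \<notin> D \<and> (symdiff V {i}, V) \<in> D))"

definition outmap :: "(nat set \<times> nat set) set \<Rightarrow> nat set \<Rightarrow> nat set" where
  "outmap D V = {i. (V, symdiff V {i}) \<in> D}"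

definition Lgraph :: "nat \<Rightarrow> (nat set \<times> nat set) set \<Rightarrow> nat set \<Rightarrow> (nat \<times> nat) set" where
  "Lgraph n D V = {(i, j). i \<in> {1..n} - V \<and> j \<in> {1..n} - V \<and> i \<noteq> j \<and>
                       j \<in> symdiff (outmap D V) (outmap D (V \<union> {i}))}"

definition property_L :: "nat \<Rightarrow> (nat set \<times> nat set) set \<Rightarrow> bool" where
  "property_L n D \<longleftrightarrow> (\<forall>V \<subseteq> {1..n}. acyclic (Lgraph n D V))"

definition is_sink_in_face :: "(nat set \<times> nat set) set \<Rightarrow> nat set \<Rightarrow> nat set \<Rightarrow> nat set \<Rightarrow> bool" where
  "is_sink_in_face D U W X \<longleftrightarrow> U \<subseteq> X \<and> X \<subseteq> W \<and>
     (\<forall>Y. U \<subseteq> Y \<and> Y \<subseteq> W \<longrightarrow> (X, Y) \<notin> D)"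

definition is_USO :: "nat \<Rightarrow> (nat set \<times> nat set) set \<Rightarrow> bool" where
  "is_USO n D \<longleftrightarrow> cube_orientation n D \<and>
     (\<forall>U W. U \<subseteq> W \<and> W \<subseteq> {1..n} \<longrightarrow> (\<exists>!X. is_sink_in_face D U W X))"

end

theory Submission
  imports Defs
begin

text \<open>Take a bit \<open>b i T\<close> for every coordinate \<open>i\<close> and every set \<open>T\<close> of coordinates above \<open>i\<close>,
  and direct the \<open>i\<close>-edge at \<open>V\<close> according to \<open>b i (V \<inter> {i<..})\<close>. In such a triangular
  orientation the sink of a face is determined coordinate by coordinate from the top, so it
  exists and is unique, and every arc \<open>(i, j)\<close> of an L-graph has \<open>j < i\<close>, so the L-graphs are
  acyclic. The bits are indexed by the nonempty subsets \<open>B = insert i T\<close> of \<open>[n]\<close> with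
  \<open>i = Min B\<close>, and different choices give different orientations.\<close>

text \<open>Xoring with \<open>i \<in> V\<close> makes both endpoints of an \<open>i\<close>-edge agree on its direction;
  \<open>b i T\<close> says whether it points towards the endpoint containing \<open>i\<close>.\<close>
definition triangular_out :: "(nat \<Rightarrow> nat set \<Rightarrow> bool) \<Rightarrow> nat set \<Rightarrow> nat \<Rightarrow> bool" where
  "triangular_out b V i \<longleftrightarrow> (i \<in> V) \<noteq> b i {j \<in> V. i < j}"

definition triangular_orientation ::
    "nat \<Rightarrow> (nat \<Rightarrow> nat set \<Rightarrow> bool) \<Rightarrow> (nat set \<times> nat set) set" where
  "triangular_orientation n b =
     {(V, symdiff V {i}) | V i. V \<subseteq> {1..n} \<and> i \<in> {1..n} \<and> triangular_out b V i}"

lemma symdiff_singleton_inj: "symdiff V {i} = symdiff V {i'} \<Longrightarrow> i = i'"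
  unfolding symdiff_def by (cases "i \<in> V") blast+

lemma symdiff_singleton_twice [simp]: "symdiff (symdiff V {i}) {i} = V"
  unfolding symdiff_def by auto

lemma mem_triangular_orientation:
  "(X, Y) \<in> triangular_orientation n b \<longleftrightarrow>
     X \<subseteq> {1..n} \<and> (\<exists>i \<in> {1..n}. Y = symdiff X {i} \<and> triangular_out b X i)"
  unfolding triangular_orientation_def by blast

lemma edge_in_triangular_orientation:
  "(X, symdiff X {i}) \<in> triangular_orientation n b \<longleftrightarrow>
     X \<subseteq> {1..n} \<and> i \<in> {1..n} \<and> triangular_out b X i"
  unfolding mem_triangular_orientation by (blast dest: symdiff_singleton_inj)

lemma outmap_triangular_orientation:
  "X \<subseteq> {1..n} \<Longrightarrow> outmap (triangular_orientation n b) X = {i \<in> {1..n}. triangular_out b X i}"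
  unfolding outmap_def edge_in_triangular_orientation by auto

lemma triangular_out_flip: "triangular_out b (symdiff V {i}) i \<longleftrightarrow> \<not> triangular_out b V i"
proof -
  have "{j \<in> symdiff V {i}. i < j} = {j \<in> V. i < j}" "i \<in> symdiff V {i} \<longleftrightarrow> i \<notin> V"
    unfolding symdiff_def by auto
  then show ?thesis unfolding triangular_out_def by auto
qed

lemma triangular_out_agree_above:
  assumes "\<forall>j > k. j \<in> X \<longleftrightarrow> j \<in> Y"
  shows "triangular_out b X k = triangular_out b Y k \<longleftrightarrow> (k \<in> X \<longleftrightarrow> k \<in> Y)"
proof -
  have "{j \<in> X. k < j} = {j \<in> Y. k < j}" using assms by auto
  then show ?thesis unfolding triangular_out_def by auto
qed

lemma cube_orientation_triangular: "cube_orientation n (triangular_orientation n b)"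
  unfolding cube_orientation_def
proof (intro conjI ballI allI impI)
  show "triangular_orientation n b \<subseteq> {(V, symdiff V {i}) | V i. V \<subseteq> {1..n} \<and> i \<in> {1..n}}"
    unfolding triangular_orientation_def by blast
next
  fix V i assume V: "V \<subseteq> {1..n}" and i: "i \<in> {1..n}"
  have "symdiff V {i} \<subseteq> {1..n}" using V i unfolding symdiff_def by auto
  then have "(symdiff V {i}, V) \<in> triangular_orientation n b \<longleftrightarrow> \<not> triangular_out b V i"
    using edge_in_triangular_orientation[of "symdiff V {i}" i n b] i triangular_out_flip by simp
  moreover have "(V, symdiff V {i}) \<in> triangular_orientation n b \<longleftrightarrow> triangular_out b V i"
    using edge_in_triangular_orientation V i by auto
  ultimately show "(V, symdiff V {i}) \<in> triangular_orientation n b \<and>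
      (symdiff V {i}, V) \<notin> triangular_orientation n b \<or>
    (V, symdiff V {i}) \<notin> triangular_orientation n b \<and>
      (symdiff V {i}, V) \<in> triangular_orientation n b" by blast
qed

lemma is_sink_in_face_triangular_iff:
  assumes "U \<subseteq> W" "W \<subseteq> {1..n}"
  shows "is_sink_in_face (triangular_orientation n b) U W X \<longleftrightarrow>
    U \<subseteq> X \<and> X \<subseteq> W \<and> (\<forall>i \<in> W - U. \<not> triangular_out b X i)"
proof -
  have "(\<exists>Y. U \<subseteq> Y \<and> Y \<subseteq> W \<and> (X, Y) \<in> triangular_orientation n b) \<longleftrightarrow>
      (\<exists>i \<in> W - U. triangular_out b X i)" if "U \<subseteq> X" "X \<subseteq> W"
  proof
    assume "\<exists>Y. U \<subseteq> Y \<and> Y \<subseteq> W \<and> (X, Y) \<in> triangular_orientation n b"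
    then obtain i where "U \<subseteq> symdiff X {i}" "symdiff X {i} \<subseteq> W" "triangular_out b X i"
      unfolding mem_triangular_orientation by blast
    moreover have "i \<in> W - U" using calculation(1,2) that unfolding symdiff_def by auto
    ultimately show "\<exists>i \<in> W - U. triangular_out b X i" by blast
  next
    assume "\<exists>i \<in> W - U. triangular_out b X i"
    then obtain i where i: "i \<in> W - U" "triangular_out b X i" by blast
    then have "U \<subseteq> symdiff X {i}" "symdiff X {i} \<subseteq> W"
      using that unfolding symdiff_def by auto
    moreover have "(X, symdiff X {i}) \<in> triangular_orientation n b"
      unfolding edge_in_triangular_orientation using i that assms by auto
    ultimately show "\<exists>Y. U \<subseteq> Y \<and> Y \<subseteq> W \<and> (X, Y) \<in> triangular_orientation n b" by blast
  qed
  then show ?thesis unfolding is_sink_in_face_def by blast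
qed

lemma triangular_sink_exists:
  assumes "finite W" "U \<subseteq> W"
  shows "\<exists>X. U \<subseteq> X \<and> X \<subseteq> W \<and> (\<forall>i \<in> W - U. \<not> triangular_out b X i)"
  using assms
proof (induction "card (W - U)" arbitrary: U W rule: less_induct)
  case less
  show ?case
  proof (cases "W - U = {}")
    case True
    then show ?thesis using less.prems by auto
  next
    case False
    define k where "k = Max (W - U)"
    have fin: "finite (W - U)" using less.prems by auto
    have k: "k \<in> W - U" "\<forall>j \<in> W - U. j \<le> k"
      using Max_in[OF fin False] Max_ge[OF fin] k_def by auto
    have "W - {k} - U = W - U - {k}" "W - insert k U = W - U - {k}" by auto
    then have smaller: "card (W - {k} - U) < card (W - U)" "card (W - insert k U) < card (W - U)"
      using card_Diff1_less[OF fin k(1)] by simp_all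
    obtain X0 where
      X0: "U \<subseteq> X0" "X0 \<subseteq> W - {k}" "\<forall>i \<in> W - {k} - U. \<not> triangular_out b X0 i"
      using less.hyps[OF smaller(1)] less.prems k(1) by auto
    obtain X1 where
      X1: "insert k U \<subseteq> X1" "X1 \<subseteq> W" "\<forall>i \<in> W - insert k U. \<not> triangular_out b X1 i"
      using less.hyps[OF smaller(2)] less.prems k(1) by auto
    show ?thesis
    proof (cases "triangular_out b X0 k")
      case False
      then show ?thesis using X0 by (intro exI[of _ X0]) auto
    next
      case True
      txt \<open>Above \<open>k\<close> both sinks coincide with \<open>U\<close>, and they differ at \<open>k\<close>.\<close>
      have "j \<in> X0 \<longleftrightarrow> j \<in> X1" if "k < j" for j
      proof -
        have "j \<notin> W - U" using k(2) that leD by blast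
        then show ?thesis using X0(1,2) X1(1,2) by blast
      qed
      then have "\<not> triangular_out b X1 k"
        using triangular_out_agree_above[of k X0 X1 b] True X0(2) X1(1) by auto
      then show ?thesis using X1 by (intro exI[of _ X1]) auto
    qed
  qed
qed

lemma triangular_sink_unique:
  assumes "finite W" "U \<subseteq> X" "X \<subseteq> W" "U \<subseteq> Y" "Y \<subseteq> W"
    and "\<forall>i \<in> W - U. \<not> triangular_out b X i" "\<forall>i \<in> W - U. \<not> triangular_out b Y i"
  shows "X = Y"
proof (rule ccontr)
  assume "X \<noteq> Y"
  define E where "E = symdiff X Y"
  define k where "k = Max E"
  have fin: "finite E"
    using assms(1,3,5) finite_subset unfolding E_def symdiff_def by blast
  have "E \<noteq> {}" using \<open>X \<noteq> Y\<close> unfolding E_def symdiff_def by auto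
  then have k: "k \<in> E" "\<forall>j \<in> E. j \<le> k" using Max_in[OF fin] Max_ge[OF fin] k_def by auto
  have "j \<in> X \<longleftrightarrow> j \<in> Y" if "k < j" for j
  proof -
    have "j \<notin> E" using k(2) that leD by blast
    then show ?thesis unfolding E_def symdiff_def by blast
  qed
  moreover have "k \<in> X \<longleftrightarrow> k \<notin> Y" using k(1) unfolding E_def symdiff_def by auto
  ultimately have "triangular_out b X k \<noteq> triangular_out b Y k"
    using triangular_out_agree_above[of k X Y b] by auto
  moreover have "k \<in> W - U" using k(1) assms(2-5) unfolding E_def symdiff_def by auto
  ultimately show False using assms(6,7) by blast
qed

lemma is_USO_triangular: "is_USO n (triangular_orientation n b)"
  unfolding is_USO_def
proof (intro conjI allI impI cube_orientation_triangular)
  fix U W assume "U \<subseteq> W \<and> W \<subseteq> {1..n}"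
  then have UW: "U \<subseteq> W" "W \<subseteq> {1..n}" by auto
  then have fin: "finite W" by (simp add: finite_subset)
  obtain X where X: "U \<subseteq> X \<and> X \<subseteq> W \<and> (\<forall>i \<in> W - U. \<not> triangular_out b X i)"
    using triangular_sink_exists[OF fin UW(1), of b] by blast
  show "\<exists>!X. is_sink_in_face (triangular_orientation n b) U W X"
    unfolding is_sink_in_face_triangular_iff[OF UW]
  proof (rule ex1I[of _ X])
    fix Y assume "U \<subseteq> Y \<and> Y \<subseteq> W \<and> (\<forall>i \<in> W - U. \<not> triangular_out b Y i)"
    then show "Y = X" using X triangular_sink_unique[OF fin, of U Y X b] by simp
  qed (fact X)
qed

lemma acyclic_greater: "acyclic {(i :: nat, j). j < i}"
proof -
  have "(a, b) \<in> {(i :: nat, j). j < i}\<^sup>+ \<Longrightarrow> b < a" for a b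
    by (induction rule: trancl_induct) auto
  then show ?thesis unfolding acyclic_def by blast
qed

lemma Lgraph_triangular_descending: "Lgraph n (triangular_orientation n b) V \<subseteq> {(i, j). j < i}"
  if "V \<subseteq> {1..n}"
proof clarify
  fix i j assume "(i, j) \<in> Lgraph n (triangular_orientation n b) V"
  then have "i \<in> {1..n} - V" "j \<in> {1..n} - V" "i \<noteq> j"
    and "j \<in> symdiff (outmap (triangular_orientation n b) V)
                     (outmap (triangular_orientation n b) (V \<union> {i}))"
    unfolding Lgraph_def by auto
  then have "triangular_out b V j \<noteq> triangular_out b (V \<union> {i}) j"
    using that outmap_triangular_orientation[of _ n b] unfolding symdiff_def by auto
  then show "j < i"
    using triangular_out_agree_above[of j V "V \<union> {i}" b] \<open>i \<noteq> j\<close> by (cases "i < j") auto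
qed

lemma property_L_triangular: "property_L n (triangular_orientation n b)"
  unfolding property_L_def
  using acyclic_subset[OF acyclic_greater Lgraph_triangular_descending] by blast

definition bits_of_sets :: "nat set set \<Rightarrow> nat \<Rightarrow> nat set \<Rightarrow> bool" where
  "bits_of_sets S i T \<longleftrightarrow> insert i T \<in> S"

lemma min_edge_in_triangular_orientation:
  assumes "B \<subseteq> {1..n}" "B \<noteq> {}"
  shows "(B - {Min B}, symdiff (B - {Min B}) {Min B}) \<in> triangular_orientation n (bits_of_sets S)
    \<longleftrightarrow> B \<in> S"
proof -
  have fin: "finite B" using assms(1) finite_subset by blast
  then have m: "Min B \<in> B" using assms(2) by simp
  have "{j \<in> B - {Min B}. Min B < j} = B - {Min B}"
    using Min_le[OF fin] by (auto simp: order.not_eq_order_implies_strict)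
  then have "insert (Min B) {j \<in> B - {Min B}. Min B < j} = B" using m by auto
  then have "triangular_out (bits_of_sets S) (B - {Min B}) (Min B) \<longleftrightarrow> B \<in> S"
    unfolding triangular_out_def bits_of_sets_def by simp
  then show ?thesis unfolding edge_in_triangular_orientation using assms(1) m by auto
qed

lemma inj_on_triangular_orientation_bits:
  "inj_on (\<lambda>S. triangular_orientation n (bits_of_sets S)) (Pow (Pow {1..n} - {{}}))"
proof (rule inj_onI)
  fix S S' assume S: "S \<in> Pow (Pow {1..n} - {{}})" "S' \<in> Pow (Pow {1..n} - {{}})"
    and eq: "triangular_orientation n (bits_of_sets S) = triangular_orientation n (bits_of_sets S')"
  have "B \<in> S \<longleftrightarrow> B \<in> S'" if "B \<subseteq> {1..n}" "B \<noteq> {}" for B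
    using min_edge_in_triangular_orientation[OF that] eq by metis
  then show "S = S'" using S by blast
qed

lemma finite_cube_orientations: "finite {D. cube_orientation n D}"
proof (rule finite_subset)
  show "{D. cube_orientation n D} \<subseteq> Pow (Pow {1..n} \<times> Pow {1..n})"
    unfolding cube_orientation_def symdiff_def by blast
qed simp

theorem theorem3p5:
  fixes n :: nat
  assumes "n \<ge> 1"
  shows "card {D. cube_orientation n D \<and> is_USO n D \<and> property_L n D} \<ge> 2 ^ (2 ^ n - 1)"
proof -
  let ?orient = "\<lambda>S. triangular_orientation n (bits_of_sets S)"
  let ?Q = "Pow {1..n} - {{}}"
  have "2 ^ (2 ^ n - 1) = card (Pow ?Q)" by (simp add: card_Pow)
  also have "\<dots> = card (?orient ` Pow ?Q)"
    using card_image[OF inj_on_triangular_orientation_bits] by simp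
  also have "\<dots> \<le> card {D. cube_orientation n D \<and> is_USO n D \<and> property_L n D}"
    using finite_cube_orientations
    by (intro card_mono)
       (auto intro: cube_orientation_triangular is_USO_triangular property_L_triangular)
  finally show ?thesis .
qed

end
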